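(* Let $D:\mathbb R^2\setminus\{0\}\to\mathbb R$ be nonnegative, bounded and continuously differentiable, and consider $\ddot x+D(x)\dot x=-x/|x|^3$. Every rectilinear solution $x_*:[-T,0]\to\mathbb R^2\setminus\{0\}$ of this equation is nondegenerate.
   Context: A solution is rectilinear if it has the form $x_*(t)=r_*(t)w_0$ with $w_0$ a fixed unit vector and $r_*>0$. A solution $x_*:[-T,0]\to\mathbb R^2\setminus\{0\}$ is called nondegenerate if the only solution $w:[-T,0]\to\mathbb R^2$ of the variational equation $$\ddot w+\langle\nabla D(x_*(t)),w\rangle\dot x_*(t)+D(x_*(t))\dot w=-\frac{1}{|x_*(t)|^3}w+3\frac{\langle x_*(t),w\rangle}{|x_*(t)|^5}x_*(t)$$ with $w(-T)=0=w(0)$ is $w\equiv0$. *)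

theory Defs
  imports "HOL-Analysis.Analysis"
begin

definition kepler_solution ::
  "(real^2 \<Rightarrow> real) \<Rightarrow> real \<Rightarrow> (real \<Rightarrow> real^2) \<Rightarrow> (real \<Rightarrow> real^2) \<Rightarrow> (real \<Rightarrow> real^2) \<Rightarrow> bool"
where
  "kepler_solution D T x x' x'' \<longleftrightarrow>
     (\<forall>t\<in>{-T..0}.
        x t \<noteq> 0 \<and>
        (x has_vector_derivative x' t) (at t within {-T..0}) \<and>
        (x' has_vector_derivative x'' t) (at t within {-T..0}) \<and>
        x'' t + D (x t) *\<^sub>R x' t = - (1 / norm (x t) ^ 3) *\<^sub>R x t)"

definition rectilinear :: "real \<Rightarrow> (real \<Rightarrow> real^2) \<Rightarrow> bool" where
  "rectilinear T x \<longleftrightarrow>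
     (\<exists>w0 r. norm w0 = 1 \<and> (\<forall>t\<in>{-T..0}. r t > 0 \<and> x t = r t *\<^sub>R w0))"

text \<open>Nondegeneracy: the only solution of the variational equation along x
  (with x' the velocity of x and gradD the gradient of D) vanishing at -T and 0 is zero.\<close>

definition nondegenerate ::
  "(real^2 \<Rightarrow> real) \<Rightarrow> (real^2 \<Rightarrow> real^2) \<Rightarrow> real \<Rightarrow> (real \<Rightarrow> real^2) \<Rightarrow> (real \<Rightarrow> real^2) \<Rightarrow> bool"
where
  "nondegenerate D gradD T x x' \<longleftrightarrow>
     (\<forall>w w' w''.
        (\<forall>t\<in>{-T..0}.
           (w has_vector_derivative w' t) (at t within {-T..0}) \<and>
           (w' has_vector_derivative w'' t) (at t within {-T..0}) \<and>
           w'' t + (gradD (x t) \<bullet> w t) *\<^sub>R x' t + D (x t) *\<^sub>R w' t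
             = - (1 / norm (x t) ^ 3) *\<^sub>R w t
               + (3 * (x t \<bullet> w t) / norm (x t) ^ 5) *\<^sub>R x t)
        \<and> w (-T) = 0 \<and> w 0 = 0
        \<longrightarrow> (\<forall>t\<in>{-T..0}. w t = 0))"

end

theory Submission
  imports Defs
begin

text \<open>Along a rectilinear solution x = r w0 (r > 0), split a solution w of the variational
  equation into a = w \<bullet> w0 and b = w \<bullet> n with n \<perp> w0. The transversal component b solves
  the same equation y'' + D y' + y / r^3 = 0 as the radius r. Their Wronskian W satisfies
  W' = - D W, so with D \<ge> 0 it stays zero once it vanishes; it vanishes at an interior extremum
  of b / r, and together with b(-T) = b(0) = 0 this forces b = 0 (Sturm separation).
  The radial component then satisfies (a' + D a)' = 2 a / r^3, as the derivative of D along x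
  is r' (\<nabla>D \<bullet> w0). At a positive maximum of a the quantity a' + D a is nonnegative and
  increases afterwards, so a' \<ge> - M a for a bound M of D and a e^(M t) cannot decrease to zero:
  a maximum principle, which gives a = 0.\<close>

lemma deriv_zero_at_interior_max:
  fixes f :: "real \<Rightarrow> real"
  assumes t: "t \<in> {l<..<u}" and f': "(f has_real_derivative f') (at t within {l..u})"
    and max: "\<forall>s\<in>{l..u}. f s \<le> f t"
  shows "f' = 0"
proof -
  have "(f has_derivative (*) f') (at t)"
    using f' t at_within_Icc_at[of l t u] by (simp add: has_field_derivative_def)
  moreover have "\<forall>s\<in>{l<..<u}. f s \<le> f t" using max by auto
  ultimately have "(*) f' = (\<lambda>h. 0)" using t by (intro differential_zero_maxmin[of t "{l<..<u}"]) auto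
  then show ?thesis by (metis mult.right_neutral)
qed

lemma DERIV_nonneg_imp_le_within:
  fixes f f' :: "real \<Rightarrow> real"
  assumes "l \<le> u" and sub: "{l..u} \<subseteq> S"
    and f': "\<forall>t\<in>S. (f has_real_derivative f' t) (at t within S)"
    and nonneg: "\<forall>t\<in>{l<..<u}. 0 \<le> f' t"
  shows "f l \<le> f u"
proof (rule DERIV_nonneg_imp_increasing_open[OF \<open>l \<le> u\<close>])
  have f'_Icc: "(f has_real_derivative f' t) (at t within {l..u})" if "t \<in> {l..u}" for t
    using f' sub that by (blast intro: has_field_derivative_subset)
  then show "continuous_on {l..u} f" by (intro DERIV_continuous_on) auto
  fix t assume "l < t" "t < u"
  then show "\<exists>y. (f has_real_derivative y) (at t) \<and> 0 \<le> y"
    using f'_Icc[of t] nonneg at_within_Icc_at[of l t u] by auto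
qed

lemma positive_interior_max:
  fixes f f' :: "real \<Rightarrow> real"
  assumes f': "\<forall>t\<in>{l..u}. (f has_real_derivative f' t) (at t within {l..u})"
    and "f l = 0" "f u = 0" and "t0 \<in> {l..u}" "0 < f t0"
  obtains tm where "tm \<in> {l<..<u}" "0 < f tm" "\<forall>t\<in>{l..u}. f t \<le> f tm" "f' tm = 0"
proof -
  have "continuous_on {l..u} f" using f' by (intro DERIV_continuous_on) auto
  then obtain tm where tm: "tm \<in> {l..u}" "\<forall>t\<in>{l..u}. f t \<le> f tm"
    using continuous_attains_sup[OF compact_Icc] assms(4) by blast
  have "0 < f tm" using tm assms(4,5) by force
  with assms(2,3) tm have tm_in: "tm \<in> {l<..<u}" by (auto simp: less_le)
  have "f' tm = 0" using deriv_zero_at_interior_max[OF tm_in _ tm(2)] f' tm by blast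
  with tm tm_in \<open>0 < f tm\<close> show thesis by (intro that)
qed

lemma first_nonpos_point:
  fixes f :: "real \<Rightarrow> real"
  assumes "l \<le> u" and "continuous_on {l..u} f" and "0 < f l" and "f u \<le> 0"
  obtains \<beta> where "\<beta> \<in> {l<..u}" "f \<beta> \<le> 0" "\<forall>t\<in>{l..<\<beta>}. 0 < f t"
proof -
  define Z where "Z = {t \<in> {l..u}. f t \<le> 0}"
  have "closed Z"
    unfolding Z_def using assms(2) by (intro continuous_on_closed_Collect_le) auto
  moreover have "u \<in> Z" "bdd_below Z"
    using assms unfolding Z_def by (auto intro: bdd_belowI[of _ l])
  ultimately have "Inf Z \<in> Z" by (intro closed_contains_Inf) auto
  moreover have "0 < f t" if "l \<le> t" "t < Inf Z" for t
    using cInf_lower[OF _ \<open>bdd_below Z\<close>, of t] that \<open>Inf Z \<in> Z\<close> unfolding Z_def by force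
  ultimately show thesis
    using assms(3) by (intro that[of "Inf Z"]) (auto simp: Z_def less_le)
qed

lemma maximum_principle_nonpos:
  fixes a a' d k :: "real \<Rightarrow> real" and M :: real
  assumes a': "\<forall>t\<in>{l..u}. (a has_real_derivative a' t) (at t within {l..u})"
    and p': "\<forall>t\<in>{l..u}. ((\<lambda>t. a' t + d t * a t) has_real_derivative k t * a t) (at t within {l..u})"
    and d: "\<forall>t\<in>{l..u}. 0 \<le> d t \<and> d t \<le> M"
    and k: "\<forall>t\<in>{l..u}. 0 < k t"
    and "a l = 0" "a u = 0"
  shows "\<forall>t\<in>{l..u}. a t \<le> 0"
proof (rule ccontr)
  assume "\<not> ?thesis"
  then obtain t0 where "t0 \<in> {l..u}" "0 < a t0" by force
  with a' \<open>a l = 0\<close> \<open>a u = 0\<close> obtain tm where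
    tm: "tm \<in> {l<..<u}" "0 < a tm" "\<forall>t\<in>{l..u}. a t \<le> a tm" "a' tm = 0"
    by (rule positive_interior_max)
  have cont: "continuous_on {l..u} a" using a' by (intro DERIV_continuous_on) auto
  obtain \<beta> where \<beta>: "\<beta> \<in> {tm<..u}" "a \<beta> \<le> 0" and pos: "\<forall>t\<in>{tm..<\<beta>}. 0 < a t"
  proof (rule first_nonpos_point[of tm u a])
    show "continuous_on {tm..u} a" using cont tm by (auto intro: continuous_on_subset)
  qed (use tm \<open>a u = 0\<close> in auto)
  have growth: "0 \<le> a' t + M * a t" if t: "t \<in> {tm<..<\<beta>}" for t
  proof -
    have "0 < a t" using pos t by simp
    have "0 \<le> a' tm + d tm * a tm" using d tm by simp
    also have "\<dots> \<le> a' t + d t * a t"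
      using t \<beta> tm pos k
      by (intro DERIV_nonneg_imp_le_within[OF _ _ p']) (auto intro!: mult_nonneg_nonneg less_imp_le)
    also have "\<dots> \<le> a' t + M * a t"
      using d t \<beta> tm \<open>0 < a t\<close> by (intro add_left_mono mult_right_mono) auto
    finally show ?thesis .
  qed
  have "a tm * exp (M * tm) \<le> a \<beta> * exp (M * \<beta>)"
  proof (rule DERIV_nonneg_imp_le_within[where S="{l..u}" and f="\<lambda>t. a t * exp (M * t)"])
    show "\<forall>t\<in>{l..u}. ((\<lambda>t. a t * exp (M * t)) has_real_derivative (a' t + M * a t) * exp (M * t))
        (at t within {l..u})"
      using a' by (auto intro!: derivative_eq_intros simp: algebra_simps)
    show "\<forall>t\<in>{tm<..<\<beta>}. 0 \<le> (a' t + M * a t) * exp (M * t)" using growth by simp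
  qed (use \<beta> tm in auto)
  moreover have "a \<beta> * exp (M * \<beta>) \<le> 0" using \<beta> by (simp add: mult_nonpos_nonneg)
  moreover have "0 < a tm * exp (M * tm)" using tm by simp
  ultimately show False by linarith
qed

lemma maximum_principle_zero:
  fixes a a' d k :: "real \<Rightarrow> real" and M :: real
  assumes a': "\<forall>t\<in>{l..u}. (a has_real_derivative a' t) (at t within {l..u})"
    and p': "\<forall>t\<in>{l..u}. ((\<lambda>t. a' t + d t * a t) has_real_derivative k t * a t) (at t within {l..u})"
    and d: "\<forall>t\<in>{l..u}. 0 \<le> d t \<and> d t \<le> M"
    and k: "\<forall>t\<in>{l..u}. 0 < k t"
    and "a l = 0" "a u = 0"
  shows "\<forall>t\<in>{l..u}. a t = 0"
proof -
  have "\<forall>t\<in>{l..u}. a t \<le> 0" by (rule maximum_principle_nonpos[OF a' p' d k]) fact+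
  moreover have "\<forall>t\<in>{l..u}. - a t \<le> 0"
  proof (rule maximum_principle_nonpos[OF _ _ d k])
    show "\<forall>t\<in>{l..u}. ((\<lambda>t. - a t) has_real_derivative - a' t) (at t within {l..u})"
      using a' by (auto intro: DERIV_minus)
    show "\<forall>t\<in>{l..u}. ((\<lambda>t. - a' t + d t * - a t) has_real_derivative k t * - a t) (at t within {l..u})"
    proof
      fix t assume "t \<in> {l..u}"
      with p' have "((\<lambda>t. - (a' t + d t * a t)) has_real_derivative - (k t * a t)) (at t within {l..u})"
        by (intro DERIV_minus) auto
      then show "((\<lambda>t. - a' t + d t * - a t) has_real_derivative k t * - a t) (at t within {l..u})"
        by simp
    qed
  qed (use \<open>a l = 0\<close> \<open>a u = 0\<close> in auto)
  ultimately show ?thesis by force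
qed

lemma sturm_quotient_nonpos:
  fixes c q d s :: "real \<Rightarrow> real"
  assumes c': "\<forall>t\<in>{l..u}. (c has_real_derivative q t / s t) (at t within {l..u})"
    and q': "\<forall>t\<in>{l..u}. (q has_real_derivative - d t * q t) (at t within {l..u})"
    and d: "\<forall>t\<in>{l..u}. 0 \<le> d t"
    and s: "\<forall>t\<in>{l..u}. s t \<noteq> 0"
    and "c l = 0" "c u = 0"
  shows "\<forall>t\<in>{l..u}. c t \<le> 0"
proof (rule ccontr)
  assume "\<not> ?thesis"
  then obtain t0 where "t0 \<in> {l..u}" "0 < c t0" by force
  with c' \<open>c l = 0\<close> \<open>c u = 0\<close> obtain tm where
    tm: "tm \<in> {l<..<u}" "0 < c tm" "\<forall>t\<in>{l..u}. c t \<le> c tm" "q tm / s tm = 0"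
    by (rule positive_interior_max)
  then have "q tm = 0" using s by simp
  have "q t = 0" if t: "t \<in> {tm..u}" for t
  proof -
    have "- (q tm)\<^sup>2 \<le> - (q t)\<^sup>2"
    proof (rule DERIV_nonneg_imp_le_within[where S="{l..u}" and f="\<lambda>t. - (q t)\<^sup>2"])
      show "\<forall>t\<in>{l..u}. ((\<lambda>t. - (q t)\<^sup>2) has_real_derivative 2 * d t * (q t)\<^sup>2) (at t within {l..u})"
        using q' by (auto intro!: derivative_eq_intros simp: power2_eq_square)
      show "\<forall>t\<in>{tm<..<t}. 0 \<le> 2 * d t * (q t)\<^sup>2" using d t tm by auto
    qed (use t tm in auto)
    then show ?thesis using \<open>q tm = 0\<close> by simp
  qed
  then have "c tm \<le> c u"
    using tm by (intro DERIV_nonneg_imp_le_within[where S="{l..u}", OF _ _ c']) auto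
  then show False using tm \<open>c u = 0\<close> by simp
qed

lemma sturm_separation_zero:
  fixes y y' y'' z z' z'' d k :: "real \<Rightarrow> real"
  assumes y: "\<forall>t\<in>{l..u}. (y has_real_derivative y' t) (at t within {l..u}) \<and>
      (y' has_real_derivative y'' t) (at t within {l..u}) \<and> y'' t + d t * y' t + k t * y t = 0"
    and z: "\<forall>t\<in>{l..u}. (z has_real_derivative z' t) (at t within {l..u}) \<and>
      (z' has_real_derivative z'' t) (at t within {l..u}) \<and> z'' t + d t * z' t + k t * z t = 0"
    and y_pos: "\<forall>t\<in>{l..u}. 0 < y t"
    and d: "\<forall>t\<in>{l..u}. 0 \<le> d t"
    and "z l = 0" "z u = 0"
  shows "\<forall>t\<in>{l..u}. z t = 0"
proof -
  define W where "W t = z' t * y t - z t * y' t" for t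
  have W': "(W has_real_derivative - d t * W t) (at t within {l..u})" if "t \<in> {l..u}" for t
  proof -
    have "z'' t + d t * z' t + k t * z t = 0" "y'' t + d t * y' t + k t * y t = 0"
      using y z that by blast+
    then have "z'' t * y t - z t * y'' t = - d t * W t"
      unfolding W_def by algebra
    moreover have "(W has_real_derivative z'' t * y t - z t * y'' t) (at t within {l..u})"
      unfolding W_def [abs_def] using y z that
      by (auto intro!: derivative_eq_intros simp: algebra_simps)
    ultimately show ?thesis by simp
  qed
  have quot': "((\<lambda>t. z t / y t) has_real_derivative W t / (y t * y t)) (at t within {l..u})"
    if "t \<in> {l..u}" for t
  proof -
    have "y t \<noteq> 0" using y_pos that by force
    then show ?thesis using y z that unfolding W_def
      by (auto intro!: derivative_eq_intros simp: power2_eq_square)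
  qed
  have le: "\<forall>t\<in>{l..u}. z t / y t \<le> 0"
    by (rule sturm_quotient_nonpos[where q=W and s="\<lambda>t. y t * y t"])
      (use quot' W' d y_pos \<open>z l = 0\<close> \<open>z u = 0\<close> in auto)
  have neg_quot': "((\<lambda>t. - z t / y t) has_real_derivative - W t / (y t * y t)) (at t within {l..u})"
    and neg_W': "((\<lambda>t. - W t) has_real_derivative - d t * - W t) (at t within {l..u})"
    if "t \<in> {l..u}" for t
    using DERIV_minus[OF quot'[OF that]] DERIV_minus[OF W'[OF that]] by simp_all
  have ge: "\<forall>t\<in>{l..u}. - z t / y t \<le> 0"
    by (rule sturm_quotient_nonpos[where q="\<lambda>t. - W t" and s="\<lambda>t. y t * y t"])
      (use neg_quot' neg_W' d y_pos \<open>z l = 0\<close> \<open>z u = 0\<close> in auto)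
  show ?thesis
  proof
    fix t assume t: "t \<in> {l..u}"
    have "z t / y t \<le> 0" "- (z t / y t) \<le> 0" using le ge t by auto
    then have "z t / y t = 0" by linarith
    moreover have "y t \<noteq> 0" using y_pos t by force
    ultimately show "z t = 0" by simp
  qed
qed

definition perp :: "real^2 \<Rightarrow> real^2" where
  "perp v = vector [- v$2, v$1]"

lemma inner_perp_self [simp]: "v \<bullet> perp v = 0"
  by (simp add: perp_def inner_vec_def sum_2)

lemma unit_perp_decomposition:
  fixes e v :: "real^2"
  assumes "norm e = 1"
  shows "v = (v \<bullet> e) *\<^sub>R e + (v \<bullet> perp e) *\<^sub>R perp e"
proof -
  have "e$1 * e$1 + e$2 * e$2 = 1"
    using assms by (simp add: norm_eq_1 inner_vec_def sum_2)
  then show ?thesis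
    by (simp add: vec_eq_iff forall_2 perp_def inner_vec_def sum_2 algebra_simps) algebra
qed

lemma has_real_derivative_inner_const:
  assumes "(f has_vector_derivative f') F"
  shows "((\<lambda>t. f t \<bullet> v) has_real_derivative f' \<bullet> v) F"
  using bounded_linear.has_vector_derivative[OF bounded_linear_inner_left assms]
  unfolding has_real_derivative_iff_has_vector_derivative .

lemma has_real_derivative_GDERIV_compose:
  assumes "GDERIV f (x t) :> g" and "(x has_vector_derivative v) (at t within S)"
  shows "((\<lambda>t. f (x t)) has_real_derivative v \<bullet> g) (at t within S)"
proof -
  have "((f \<circ> x) has_derivative (\<lambda>h. (h *\<^sub>R v) \<bullet> g)) (at t within S)"
    using diff_chain_within[OF assms(2)[unfolded has_vector_derivative_def]
        has_derivative_at_withinI[OF assms(1)[unfolded gderiv_def]]]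
    by (simp add: o_def)
  moreover have "(\<lambda>h. (h *\<^sub>R v) \<bullet> g) = (*) (v \<bullet> g)" by auto
  ultimately show ?thesis by (simp add: has_field_derivative_def o_def)
qed

locale rectilinear_kepler_solution =
  fixes D :: "real^2 \<Rightarrow> real" and gradD :: "real^2 \<Rightarrow> real^2" and T :: real
    and x x' x'' :: "real \<Rightarrow> real^2" and w0 :: "real^2" and r :: "real \<Rightarrow> real"
  assumes D_nonneg: "\<forall>y. y \<noteq> 0 \<longrightarrow> D y \<ge> 0"
    and D_bounded: "bounded (D ` (- {0}))"
    and D_grad: "\<forall>y. y \<noteq> 0 \<longrightarrow> GDERIV D y :> gradD y"
    and T_pos: "T > 0"
    and sol: "kepler_solution D T x x' x''"
    and unit_w0: "norm w0 = 1"
    and radial: "\<forall>t\<in>{-T..0}. r t > 0 \<and> x t = r t *\<^sub>R w0"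
begin

definition r' :: "real \<Rightarrow> real" where "r' t = x' t \<bullet> w0"
definition r'' :: "real \<Rightarrow> real" where "r'' t = x'' t \<bullet> w0"
definition damping :: "real \<Rightarrow> real" where "damping t = D (x t)"

lemma inner_w0_self [simp]: "w0 \<bullet> w0 = 1"
  using unit_w0 by (simp add: norm_eq_1)

lemma r_pos: "t \<in> {-T..0} \<Longrightarrow> 0 < r t"
  and x_radial: "t \<in> {-T..0} \<Longrightarrow> x t = r t *\<^sub>R w0"
  using radial by auto

lemma norm_x: "t \<in> {-T..0} \<Longrightarrow> norm (x t) = r t"
  using r_pos[of t] x_radial[of t] unit_w0 by simp

lemma x_derivs:
  assumes "t \<in> {-T..0}"
  shows x_nonzero: "x t \<noteq> 0"
    and "(x has_vector_derivative x' t) (at t within {-T..0})"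
    and "(x' has_vector_derivative x'' t) (at t within {-T..0})"
    and "x'' t + D (x t) *\<^sub>R x' t = - (1 / norm (x t) ^ 3) *\<^sub>R x t"
  using sol assms unfolding kepler_solution_def by auto

lemma r_deriv: "t \<in> {-T..0} \<Longrightarrow> (r has_real_derivative r' t) (at t within {-T..0})"
  unfolding r'_def has_field_derivative_def
  by (rule has_derivative_transform[where f="\<lambda>t. x t \<bullet> w0"])
    (auto simp: x_radial has_real_derivative_inner_const[OF x_derivs(2), unfolded has_field_derivative_def])

lemma r'_deriv: "t \<in> {-T..0} \<Longrightarrow> (r' has_real_derivative r'' t) (at t within {-T..0})"
  unfolding r'_def [abs_def] r''_def by (rule has_real_derivative_inner_const[OF x_derivs(3)])

lemma velocity_radial:
  assumes t: "t \<in> {-T..0}"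
  shows "x' t = r' t *\<^sub>R w0"
proof -
  have "((\<lambda>t. x t \<bullet> perp w0) has_real_derivative x' t \<bullet> perp w0) (at t within {-T..0})"
    by (rule has_real_derivative_inner_const[OF x_derivs(2)[OF t]])
  moreover have "((\<lambda>t. x t \<bullet> perp w0) has_real_derivative 0) (at t within {-T..0})"
    by (rule has_field_derivative_transform_within[OF DERIV_const zero_less_one t]) (simp add: x_radial)
  ultimately have "x' t \<bullet> perp w0 = 0"
    using vector_derivative_unique_within_closed_interval[of "-T" 0 t] T_pos t
    by (simp add: has_real_derivative_iff_has_vector_derivative)
  then show ?thesis
    using unit_perp_decomposition[OF unit_w0, of "x' t"] by (simp add: r'_def)
qed

lemma radial_equation:
  "t \<in> {-T..0} \<Longrightarrow> r'' t + damping t * r' t + (1 / r t ^ 3) * r t = 0"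
  using arg_cong[OF x_derivs(4), of t "\<lambda>v. v \<bullet> w0"]
  by (simp add: r''_def damping_def velocity_radial norm_x inner_add_left) (simp add: x_radial)

lemma damping_bounds: "\<exists>M. \<forall>t\<in>{-T..0}. 0 \<le> damping t \<and> damping t \<le> M"
proof -
  obtain M where M: "\<forall>y\<in>D ` (- {0}). norm y \<le> M" using D_bounded bounded_iff by metis
  have "0 \<le> damping t \<and> damping t \<le> M" if "t \<in> {-T..0}" for t
  proof -
    have "x t \<in> - {0}" using x_nonzero[OF that] by simp
    then show ?thesis using M D_nonneg unfolding damping_def by force
  qed
  then show ?thesis by blast
qed

lemma damping_deriv:
  assumes t: "t \<in> {-T..0}"
  shows "(damping has_real_derivative r' t * (gradD (x t) \<bullet> w0)) (at t within {-T..0})"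
proof -
  have "((\<lambda>t. D (x t)) has_real_derivative x' t \<bullet> gradD (x t)) (at t within {-T..0})"
    using D_grad x_nonzero[OF t] x_derivs(2)[OF t] by (blast intro: has_real_derivative_GDERIV_compose)
  then show ?thesis by (simp add: damping_def [abs_def] velocity_radial[OF t] inner_commute)
qed

end

locale kepler_variation = rectilinear_kepler_solution +
  fixes w w' w'' :: "real \<Rightarrow> real^2"
  assumes variational: "\<forall>t\<in>{-T..0}.
      (w has_vector_derivative w' t) (at t within {-T..0}) \<and>
      (w' has_vector_derivative w'' t) (at t within {-T..0}) \<and>
      w'' t + (gradD (x t) \<bullet> w t) *\<^sub>R x' t + D (x t) *\<^sub>R w' t
        = - (1 / norm (x t) ^ 3) *\<^sub>R w t + (3 * (x t \<bullet> w t) / norm (x t) ^ 5) *\<^sub>R x t"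
    and w_left: "w (-T) = 0" and w_right: "w 0 = 0"
begin

lemma component_derivs:
  assumes "t \<in> {-T..0}"
  shows "((\<lambda>t. w t \<bullet> v) has_real_derivative w' t \<bullet> v) (at t within {-T..0})"
    and "((\<lambda>t. w' t \<bullet> v) has_real_derivative w'' t \<bullet> v) (at t within {-T..0})"
  using variational assms by (blast intro: has_real_derivative_inner_const)+

lemma variational_projection:
  assumes t: "t \<in> {-T..0}"
  shows "w'' t \<bullet> v + (gradD (x t) \<bullet> w t) * r' t * (w0 \<bullet> v) + damping t * (w' t \<bullet> v)
     = - (1 / r t ^ 3) * (w t \<bullet> v) + 3 * (w t \<bullet> w0) / r t ^ 3 * (w0 \<bullet> v)"
proof -
  have "(w'' t + (gradD (x t) \<bullet> w t) *\<^sub>R x' t + D (x t) *\<^sub>R w' t) \<bullet> v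
      = (- (1 / norm (x t) ^ 3) *\<^sub>R w t + (3 * (x t \<bullet> w t) / norm (x t) ^ 5) *\<^sub>R x t) \<bullet> v"
    using variational t by metis
  then have "w'' t \<bullet> v + (gradD (x t) \<bullet> w t) * r' t * (w0 \<bullet> v) + damping t * (w' t \<bullet> v)
      = - (1 / r t ^ 3) * (w t \<bullet> v) + 3 * (r t * (w0 \<bullet> w t)) / r t ^ 5 * r t * (w0 \<bullet> v)"
    unfolding velocity_radial[OF t] norm_x[OF t] damping_def
    by (simp add: inner_add_left inner_diff_left x_radial[OF t])
  moreover have "3 * (r t * (w0 \<bullet> w t)) / r t ^ 5 * r t * (w0 \<bullet> v)
      = 3 * (w t \<bullet> w0) / r t ^ 3 * (w0 \<bullet> v)"
    using r_pos[OF t] by (simp add: field_simps inner_commute eval_nat_numeral)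
  ultimately show ?thesis by (simp only:)
qed

lemma transversal_component_zero:
  assumes "t \<in> {-T..0}"
  shows "w t \<bullet> perp w0 = 0"
proof -
  have "w'' t \<bullet> perp w0 + damping t * (w' t \<bullet> perp w0) + (1 / r t ^ 3) * (w t \<bullet> perp w0) = 0"
    if "t \<in> {-T..0}" for t
    using variational_projection[OF that, of "perp w0"] by (simp add: inner_commute)
  then show ?thesis
    using sturm_separation_zero[of "-T" 0 r r' r'' damping "\<lambda>t. 1 / r t ^ 3"
        "\<lambda>t. w t \<bullet> perp w0" "\<lambda>t. w' t \<bullet> perp w0" "\<lambda>t. w'' t \<bullet> perp w0"]
      r_deriv r'_deriv radial_equation component_derivs r_pos damping_bounds w_left w_right assms
    by (auto simp: algebra_simps)
qed

lemma radial_component_zero: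
  assumes "t \<in> {-T..0}"
  shows "w t \<bullet> w0 = 0"
proof -
  define a where "a t = w t \<bullet> w0" for t
  define a' where "a' t = w' t \<bullet> w0" for t
  define a'' where "a'' t = w'' t \<bullet> w0" for t
  have w_radial: "w t = a t *\<^sub>R w0" if "t \<in> {-T..0}" for t
    using unit_perp_decomposition[OF unit_w0, of "w t"] transversal_component_zero[OF that]
    by (simp add: a_def)
  have p': "((\<lambda>t. a' t + damping t * a t) has_real_derivative 2 / r t ^ 3 * a t) (at t within {-T..0})"
    if t: "t \<in> {-T..0}" for t
  proof -
    have deriv: "((\<lambda>t. a' t + damping t * a t) has_real_derivative
        a'' t + (r' t * (gradD (x t) \<bullet> w0) * a t + a' t * damping t)) (at t within {-T..0})"
      unfolding a_def [abs_def] a'_def [abs_def] a''_def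
      by (intro DERIV_add DERIV_mult component_derivs damping_deriv t)
    have "gradD (x t) \<bullet> w t = a t * (gradD (x t) \<bullet> w0)" using w_radial[OF t] by simp
    then have "a'' t + a t * (gradD (x t) \<bullet> w0) * r' t + damping t * a' t
        = - (1 / r t ^ 3) * a t + 3 * a t / r t ^ 3"
      using variational_projection[OF t, of w0] by (simp add: a_def a'_def a''_def)
    moreover have "- (1 / r t ^ 3) * a t + 3 * a t / r t ^ 3 = 2 / r t ^ 3 * a t"
      by (simp add: field_simps)
    ultimately have "a'' t + r' t * (gradD (x t) \<bullet> w0) * a t + damping t * a' t = 2 / r t ^ 3 * a t"
      by (simp add: algebra_simps)
    with deriv show ?thesis by (simp add: algebra_simps)
  qed
  obtain M where M: "\<forall>t\<in>{-T..0}. 0 \<le> damping t \<and> damping t \<le> M" using damping_bounds by blast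
  have "\<forall>t\<in>{-T..0}. a t = 0"
  proof (rule maximum_principle_zero[where d=damping and k="\<lambda>t. 2 / r t ^ 3"])
    show "\<forall>t\<in>{-T..0}. (a has_real_derivative a' t) (at t within {-T..0})"
      unfolding a_def [abs_def] a'_def using component_derivs(1) by blast
  qed (use p' M r_pos w_left w_right in \<open>auto simp: a_def\<close>)
  then show ?thesis using assms by (simp add: a_def)
qed

lemma variation_zero: "t \<in> {-T..0} \<Longrightarrow> w t = 0"
  using unit_perp_decomposition[OF unit_w0, of "w t"] radial_component_zero transversal_component_zero
  by simp

end

lemma (in rectilinear_kepler_solution) nondegenerate: "nondegenerate D gradD T x x'"
proof -
  have "\<forall>t\<in>{-T..0}. w t = 0" if "kepler_variation_axioms D gradD T x x' w w' w''" for w w' w''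
  proof -
    interpret kepler_variation D gradD T x x' x'' w0 r w w' w''
      by (intro kepler_variation.intro rectilinear_kepler_solution_axioms that)
    show ?thesis using variation_zero by blast
  qed
  then show ?thesis unfolding nondegenerate_def kepler_variation_axioms_def by blast
qed

theorem lemma3p4:
  fixes D :: "real^2 \<Rightarrow> real" and gradD :: "real^2 \<Rightarrow> real^2"
    and T :: real and x x' x'' :: "real \<Rightarrow> real^2"
  assumes D_nonneg: "\<forall>y. y \<noteq> 0 \<longrightarrow> D y \<ge> 0"
    and D_bounded: "bounded (D ` (- {0}))"
    and D_grad: "\<forall>y. y \<noteq> 0 \<longrightarrow> GDERIV D y :> gradD y"
    and gradD_cont: "continuous_on (- {0}) gradD"
    and T_pos: "T > 0"
    and sol: "kepler_solution D T x x' x''"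
    and rect: "rectilinear T x"
  shows "nondegenerate D gradD T x x'"
proof -
  obtain w0 r where "norm w0 = 1" "\<forall>t\<in>{-T..0}. r t > 0 \<and> x t = r t *\<^sub>R w0"
    using rect unfolding rectilinear_def by blast
  then interpret rectilinear_kepler_solution D gradD T x x' x'' w0 r
    using D_nonneg D_bounded D_grad T_pos sol by unfold_locales
  show ?thesis by (rule nondegenerate)
qed

end
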